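(* Let $\{\epsilon_k\}$ be the sequence of penalty-barrier parameters produced by Algorithm LOG-DFL (defined in the context). Then $\lim_{k\to\infty}\epsilon_k=0$.
   Context: Problem data: $f:\mathbb{R}^n\to\mathbb{R}$, $g:\mathbb{R}^n\to\mathbb{R}^m$, $h:\mathbb{R}^n\to\mathbb{R}^q$ continuously differentiable; $l,u\in\mathbb{R}^n$ with $l<u$; $X=\{x: l\le x\le u\}$; $S_<=\{x: g(x)<0\}$; there is $x_0\in X\cap S_<$. Fix $\nu>1$. For $\epsilon>0$, $P(x;\epsilon)=f(x)-\epsilon\sum_{j=1}^m\log(-g_j(x))+\frac1\epsilon\sum_{j=1}^q|h_j(x)|^\nu$ if $x\in S_<$, and $P(x;\epsilon)=+\infty$ otherwise. $e^i$ is the $i$-th unit coordinate vector. Expansion Step$(\hat\alpha,y,p,\gamma)$ with parameter $\delta\in(0,1)$ (using the current parameter $\epsilon_k$): let $b$ be the largest $\beta\ge0$ with $y+\beta p\in X$; set $\alpha\leftarrow\hat\alpha$; repeat: $\check\alpha\leftarrow\min\{b,\alpha/\delta\}$; if $y+\check\alpha p\notin S_<$ return $\alpha$; else if $P(y+\check\alpha p;\epsilon_k)\le P(y;\epsilon_k)-\gamma\check\alpha^2$ set $\alpha\leftarrow\check\alpha$ and return if $\check\alpha=b$, else repeat; otherwise return $\alpha$. Algorithm LOG-DFL (parameters $\epsilon_0>0,\gamma>0,\theta\in(0,1),p>1,\delta\in(0,1)$, $\tilde\alpha_0^i>0$, $d_0^i=e^i$): for $k=0,1,\dots$: Step 1: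 set $y_k^1=x_k$. For $i=1,\dots,n$: (a) choose $\hat\alpha\in[0,\tilde\alpha_k^i]$ with $y_k^i+\hat\alpha d_k^i\in S_<\cap X$; if $\hat\alpha>0$ and $P(y_k^i+\hat\alpha d_k^i;\epsilon_k)\le P(y_k^i;\epsilon_k)-\gamma\hat\alpha^2$, let $\alpha_k^i$ be the output of the Expansion Step$(\hat\alpha,y_k^i,d_k^i,\gamma)$ and set $\tilde\alpha_{k+1}^i=\alpha_k^i$, $d_{k+1}^i=d_k^i$; (b) otherwise do the same with $-d_k^i$ in place of $d_k^i$, and on success set $\tilde\alpha_{k+1}^i=\alpha_k^i$, $d_{k+1}^i=-d_k^i$; (c) if neither succeeds set $\alpha_k^i=0$, $d_{k+1}^i=d_k^i$, $\tilde\alpha_{k+1}^i=\theta\tilde\alpha_k^i$. Then $y_k^{i+1}=y_k^i+\alpha_k^i d_{k+1}^i$. Step 2: let $(g_{\min})_k=\min_{i=1,\dots,n+1,\ \ell=1,\dots,m}|g_\ell(y_k^i)|$; if $\max_{i=1,\dots,n}\max\{\tilde\alpha_k^i,\alpha_k^i\}\le\min\{\epsilon_k^p,(g_{\min})_k^2\}$ set $\epsilon_{k+1}=\theta\epsilon_k$, else $\epsilon_{k+1}=\epsilon_k$. Step 3: choose any $x_{k+1}\in S_<\cap X$ with $P(x_{k+1};\epsilon_k)\le P(y_k^{n+1};\epsilon_k)$. *)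

theory Defs
  imports "HOL-Analysis.Analysis"
begin

definition C1_fun :: "('a::real_normed_vector \<Rightarrow> 'b::real_normed_vector) \<Rightarrow> bool" where
  "C1_fun F \<longleftrightarrow> (\<exists>F'. (\<forall>x. (F has_derivative blinfun_apply (F' x)) (at x)) \<and> continuous_on UNIV F')"

definition box_set :: "real^'n \<Rightarrow> real^'n \<Rightarrow> (real^'n) set" where
  "box_set l u = {x. \<forall>i. l $ i \<le> x $ i \<and> x $ i \<le> u $ i}"

definition strict_feas :: "(real^'n \<Rightarrow> real^'m) \<Rightarrow> (real^'n) set" where
  "strict_feas g = {x. \<forall>j. g x $ j < 0}"

text \<open>Penalty-barrier function P(x;eps), with value +infinity outside S_<.
  The equality constraints are h_0,...,h_(q-1).\<close>
definition penalty ::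
  "(real^'n \<Rightarrow> real) \<Rightarrow> (real^'n \<Rightarrow> real^'m) \<Rightarrow> nat \<Rightarrow> (nat \<Rightarrow> real^'n \<Rightarrow> real)
     \<Rightarrow> real \<Rightarrow> real \<Rightarrow> real^'n \<Rightarrow> ereal" where
  "penalty f g q h \<nu> \<epsilon> x =
     (if x \<in> strict_feas g
      then ereal (f x - \<epsilon> * (\<Sum>j\<in>UNIV. ln (- (g x $ j)))
                  + (1 / \<epsilon>) * (\<Sum>j<q. \<bar>h j x\<bar> powr \<nu>))
      else \<infinity>)"

definition max_step :: "real^'n \<Rightarrow> real^'n \<Rightarrow> real^'n \<Rightarrow> real^'n \<Rightarrow> real" where
  "max_step l u y p = Sup {\<beta>. 0 \<le> \<beta> \<and> y + \<beta> *\<^sub>R p \<in> box_set l u}"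

text \<open>Expansion Step: expand Pf S l u delta gamma y p a r means that the repeat-loop,
  entered with current value alpha = a, returns r.  The output of
  Expansion Step(ahat,y,p,gamma) is the r with expand ... y p ahat r.\<close>
inductive expand ::
  "(real^'n \<Rightarrow> ereal) \<Rightarrow> (real^'n) set \<Rightarrow> real^'n \<Rightarrow> real^'n \<Rightarrow> real \<Rightarrow> real
     \<Rightarrow> real^'n \<Rightarrow> real^'n \<Rightarrow> real \<Rightarrow> real \<Rightarrow> bool"
  for Pf S l u \<delta> \<gamma> y p where
  exp_out: "ac = min (max_step l u y p) (a / \<delta>) \<Longrightarrow> y + ac *\<^sub>R p \<notin> S
     \<Longrightarrow> expand Pf S l u \<delta> \<gamma> y p a a"
| exp_fail: "ac = min (max_step l u y p) (a / \<delta>) \<Longrightarrow> y + ac *\<^sub>R p \<in> S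
     \<Longrightarrow> \<not> (Pf (y + ac *\<^sub>R p) \<le> Pf y - ereal (\<gamma> * ac\<^sup>2))
     \<Longrightarrow> expand Pf S l u \<delta> \<gamma> y p a a"
| exp_bound: "ac = min (max_step l u y p) (a / \<delta>) \<Longrightarrow> y + ac *\<^sub>R p \<in> S
     \<Longrightarrow> Pf (y + ac *\<^sub>R p) \<le> Pf y - ereal (\<gamma> * ac\<^sup>2)
     \<Longrightarrow> ac = max_step l u y p
     \<Longrightarrow> expand Pf S l u \<delta> \<gamma> y p a ac"
| exp_step: "ac = min (max_step l u y p) (a / \<delta>) \<Longrightarrow> y + ac *\<^sub>R p \<in> S
     \<Longrightarrow> Pf (y + ac *\<^sub>R p) \<le> Pf y - ereal (\<gamma> * ac\<^sup>2)
     \<Longrightarrow> ac \<noteq> max_step l u y p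
     \<Longrightarrow> expand Pf S l u \<delta> \<gamma> y p ac r
     \<Longrightarrow> expand Pf S l u \<delta> \<gamma> y p a r"

text \<open>Coordinates are processed in the order
  ix 0, ..., ix (n-1) (n = CARD('n)); inner index i = 0..n-1 corresponds to the
  paper's i = 1..n and y k i to the paper's y_k^(i+1).
  atil k i = tilde alpha_k^i, alpha k i = alpha_k^i, d k i = d_k^i, eps k = eps_k;
  ahp k i / ahn k i are the trial steps hat alpha chosen in (a) / (b).\<close>
definition logdfl_run ::
  "(real^'n \<Rightarrow> real) \<Rightarrow> (real^'n \<Rightarrow> real^'m) \<Rightarrow> nat \<Rightarrow> (nat \<Rightarrow> real^'n \<Rightarrow> real) \<Rightarrow> real
   \<Rightarrow> real^'n \<Rightarrow> real^'n
   \<Rightarrow> real \<Rightarrow> real \<Rightarrow> real \<Rightarrow> real \<Rightarrow> real \<Rightarrow> (nat \<Rightarrow> 'n)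
   \<Rightarrow> (nat \<Rightarrow> real^'n) \<Rightarrow> (nat \<Rightarrow> real) \<Rightarrow> (nat \<Rightarrow> nat \<Rightarrow> real) \<Rightarrow> (nat \<Rightarrow> nat \<Rightarrow> real)
   \<Rightarrow> (nat \<Rightarrow> nat \<Rightarrow> real^'n) \<Rightarrow> (nat \<Rightarrow> nat \<Rightarrow> real^'n)
   \<Rightarrow> (nat \<Rightarrow> nat \<Rightarrow> real) \<Rightarrow> (nat \<Rightarrow> nat \<Rightarrow> real) \<Rightarrow> bool" where
  "logdfl_run f g q h \<nu> l u \<epsilon>0 \<gamma> \<theta> pe \<delta> ix x eps atil alpha d y ahp ahn \<longleftrightarrow>
   (let n = CARD('n); X = box_set l u; S = strict_feas g;
        P = (\<lambda>e. penalty f g q h \<nu> e) in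
    x 0 \<in> X \<inter> S \<and> eps 0 = \<epsilon>0 \<and>
    (\<forall>i<n. atil 0 i > 0 \<and> d 0 i = axis (ix i) 1) \<and>
    (\<forall>k.
       y k 0 = x k \<and>
       (\<forall>i<n.
          (let Pk = P (eps k); yi = y k i; D = d k i; A = atil k i;
               succ = (\<lambda>a dir. 0 < a \<and> Pk (yi + a *\<^sub>R dir) \<le> Pk yi - ereal (\<gamma> * a\<^sup>2))
           in 0 \<le> ahp k i \<and> ahp k i \<le> A \<and> yi + ahp k i *\<^sub>R D \<in> S \<inter> X \<and>
              (if succ (ahp k i) D
               then expand Pk S l u \<delta> \<gamma> yi D (ahp k i) (alpha k i)
                    \<and> atil (Suc k) i = alpha k i \<and> d (Suc k) i = D
               else 0 \<le> ahn k i \<and> ahn k i \<le> A \<and> yi + ahn k i *\<^sub>R (- D) \<in> S \<inter> X \<and>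
                    (if succ (ahn k i) (- D)
                     then expand Pk S l u \<delta> \<gamma> yi (- D) (ahn k i) (alpha k i)
                          \<and> atil (Suc k) i = alpha k i \<and> d (Suc k) i = - D
                     else alpha k i = 0 \<and> d (Suc k) i = D \<and> atil (Suc k) i = \<theta> * A))
              \<and> y k (Suc i) = yi + alpha k i *\<^sub>R d (Suc k) i)) \<and>
       eps (Suc k) =
         (if (MAX i\<in>{..<n}. max (atil k i) (alpha k i))
               \<le> min (eps k powr pe) ((Min {\<bar>g (y k i) $ j\<bar> | i j. i \<le> n})\<^sup>2)
          then \<theta> * eps k else eps k) \<and>
       x (Suc k) \<in> S \<inter> X \<and> P (eps k) (x (Suc k)) \<le> P (eps k) (y k n)))"

end

theory Submission
  imports Defs
begin

text \<open>The parameter \<open>\<epsilon>\<^sub>k\<close> is only ever kept or multiplied by \<open>\<theta> < 1\<close>, so if it does not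
  tend to 0 it is eventually constant, say \<open>\<epsilon>\<close>. From then on every sweep lowers
  \<open>P(\<cdot>;\<epsilon>)\<close> by \<open>\<gamma>\<Sum>\<^sub>i(\<alpha>\<^sub>k\<^sup>i)\<^sup>2\<close>, and \<open>P(\<cdot>;\<epsilon>)\<close> is bounded below on the compact box, so the
  accepted steps \<open>\<alpha>\<^sub>k\<^sup>i\<close> and with them the tentative steps \<open>atil\<close> tend to 0. All
  points visited lie in one sublevel set of \<open>P(\<cdot>;\<epsilon>)\<close>, on which the log-barrier keeps every
  \<open>|g\<^sub>j|\<close> above a fixed \<open>c > 0\<close>. Hence the test of Step 2 eventually succeeds and \<open>\<epsilon>\<close> is
  reduced once more, a contradiction.\<close>

lemma box_set_eq_cbox: "box_set l u = cbox l u"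
  by (auto simp: box_set_def mem_box_cart)

lemma compact_box_set: "compact (box_set l u)"
  by (simp add: box_set_eq_cbox)

lemma C1_fun_imp_continuous_on: "C1_fun F \<Longrightarrow> continuous_on A F"
  unfolding C1_fun_def
  by (meson continuous_at_imp_continuous_on has_derivative_continuous)

lemma max_step_nonneg_segment_in_box:
  fixes y p :: "real^'n"
  assumes y: "y \<in> box_set l u" and p: "p \<noteq> 0"
  shows "0 \<le> max_step l u y p"
    and "\<And>\<beta>. 0 \<le> \<beta> \<Longrightarrow> \<beta> \<le> max_step l u y p \<Longrightarrow> y + \<beta> *\<^sub>R p \<in> box_set l u"
proof -
  define B where "B = {\<beta>. 0 \<le> \<beta> \<and> y + \<beta> *\<^sub>R p \<in> cbox l u}"
  have y_cbox: "y \<in> cbox l u" using y by (simp add: box_set_eq_cbox)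
  then have "0 \<in> B" by (simp add: B_def)
  obtain R where R: "\<forall>z\<in>cbox l u. norm z \<le> R"
    using compact_imp_bounded[OF compact_cbox] bounded_iff by blast
  have "bdd_above B"
  proof (rule bdd_aboveI)
    fix b assume "b \<in> B"
    then have "0 \<le> b" and "y + b *\<^sub>R p \<in> cbox l u" by (auto simp: B_def)
    then have "b * norm p \<le> R + norm y"
      using R norm_triangle_ineq4[of "y + b *\<^sub>R p" y] by force
    then show "b \<le> (R + norm y) / norm p" using p by (simp add: field_simps)
  qed
  moreover have "closed B"
  proof -
    have "B = {0..} \<inter> (\<lambda>\<beta>. y + \<beta> *\<^sub>R p) -` cbox l u" by (auto simp: B_def)
    moreover have "closed ((\<lambda>\<beta>::real. y + \<beta> *\<^sub>R p) -` cbox l u)"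
      by (intro continuous_closed_vimage closed_cbox) (auto intro!: continuous_intros)
    ultimately show ?thesis by (simp add: closed_Int)
  qed
  ultimately have Sup_B: "Sup B \<in> B" "0 \<le> Sup B"
    using closed_contains_Sup cSup_upper \<open>0 \<in> B\<close> by blast+
  have max_step: "max_step l u y p = Sup B" by (simp add: max_step_def B_def box_set_eq_cbox)
  then show "0 \<le> max_step l u y p" using Sup_B by simp
  fix \<beta> assume \<beta>: "0 \<le> \<beta>" "\<beta> \<le> max_step l u y p"
  show "y + \<beta> *\<^sub>R p \<in> box_set l u"
  proof (cases "Sup B = 0")
    case True then show ?thesis using \<beta> max_step y by simp
  next
    case False
    define t where "t = \<beta> / Sup B"
    have t: "0 \<le> t" "t \<le> 1" using \<beta> max_step Sup_B False by (auto simp: t_def field_simps)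
    have "y + \<beta> *\<^sub>R p = (1 - t) *\<^sub>R y + t *\<^sub>R (y + Sup B *\<^sub>R p)"
      using False by (simp add: t_def algebra_simps)
    moreover have "y + Sup B *\<^sub>R p \<in> cbox l u" using Sup_B by (simp add: B_def)
    ultimately show ?thesis
      using convexD[OF convex_box(1) y_cbox, of _ "1 - t" t] t by (simp add: box_set_eq_cbox)
  qed
qed

text \<open>The expanded step never exceeds the maximal feasible step \<open>b\<close>, hence stays in the box.\<close>
lemma expand_sufficient_decrease:
  assumes "expand Pf S l u \<delta> \<gamma> y p a r"
    and "Pf (y + a *\<^sub>R p) \<le> Pf y - ereal (\<gamma> * a\<^sup>2)" "0 \<le> a"
      "y + a *\<^sub>R p \<in> S" "y + a *\<^sub>R p \<in> box_set l u"
    and y: "y \<in> box_set l u" and p: "p \<noteq> 0" and \<delta>: "0 < \<delta>"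
  shows "Pf (y + r *\<^sub>R p) \<le> Pf y - ereal (\<gamma> * r\<^sup>2) \<and> y + r *\<^sub>R p \<in> S
     \<and> y + r *\<^sub>R p \<in> box_set l u"
  using assms(1-5)
proof (induction rule: expand.induct)
  case (exp_bound ac a)
  then show ?case
    using max_step_nonneg_segment_in_box[OF y p] by auto
next
  case (exp_step ac a r)
  then have "0 \<le> ac" "ac \<le> max_step l u y p"
    using max_step_nonneg_segment_in_box(1)[OF y p] \<delta> by auto
  then show ?case
    using exp_step max_step_nonneg_segment_in_box(2)[OF y p] by auto
qed auto

lemma LIMSEQ_zero_if_reset_or_shrink:
  fixes a b :: "nat \<Rightarrow> real"
  assumes b: "b \<longlonglongrightarrow> 0" and a: "\<And>k. a (Suc k) = b k \<or> a (Suc k) = \<theta> * a k"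
    and \<theta>: "0 \<le> \<theta>" "\<theta> < 1"
  shows "a \<longlonglongrightarrow> 0"
proof (rule LIMSEQ_I)
  fix r :: real assume "0 < r"
  define e where "e = r / 2"
  have e: "0 < e" "e < r" using \<open>0 < r\<close> by (auto simp: e_def)
  obtain K where K: "\<And>k. k \<ge> K \<Longrightarrow> \<bar>b k\<bar> < e" using LIMSEQ_D[OF b e(1)] by auto
  have bound: "\<bar>a (K + m)\<bar> \<le> max e (\<theta> ^ m * \<bar>a K\<bar>)" for m
  proof (induction m)
    case (Suc m)
    consider "a (K + Suc m) = b (K + m)" | "a (K + Suc m) = \<theta> * a (K + m)" using a by auto
    then show ?case
    proof cases
      case 1 then show ?thesis using K[of "K + m"] by auto
    next
      case 2
      then have "\<bar>a (K + Suc m)\<bar> \<le> \<theta> * max e (\<theta> ^ m * \<bar>a K\<bar>)"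
        using Suc \<theta> by (simp add: abs_mult mult_left_mono)
      also have "\<dots> = max (\<theta> * e) (\<theta> ^ Suc m * \<bar>a K\<bar>)"
        using \<theta> by (simp add: max_mult_distrib_left mult.assoc)
      also have "\<dots> \<le> max e (\<theta> ^ Suc m * \<bar>a K\<bar>)"
        using \<theta> e by (intro max.mono) (simp_all add: mult_left_le_one_le)
      finally show ?thesis .
    qed
  qed simp
  have "(\<lambda>m. \<theta> ^ m * \<bar>a K\<bar>) \<longlonglongrightarrow> 0"
    using \<theta> by (intro tendsto_mult_left_zero LIMSEQ_power_zero) auto
  then obtain M where M: "\<And>m. m \<ge> M \<Longrightarrow> \<theta> ^ m * \<bar>a K\<bar> < e"
    using LIMSEQ_D[OF _ e(1)] by fastforce
  show "\<exists>N. \<forall>k\<ge>N. norm (a k - 0) < r"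
  proof (intro exI allI impI)
    fix k assume "K + M \<le> k"
    then show "norm (a k - 0) < r"
      using bound[of "k - K"] M[of "k - K"] e by auto
  qed
qed

lemma eventually_const_if_not_LIMSEQ_zero:
  fixes a :: "nat \<Rightarrow> real"
  assumes a: "\<And>k. a (Suc k) = a k \<or> a (Suc k) = \<theta> * a k" and nonneg: "\<And>k. 0 \<le> a k"
    and \<theta>: "0 \<le> \<theta>" "\<theta> < 1" and not_zero: "\<not> a \<longlonglongrightarrow> 0"
  obtains K where "\<And>k. K \<le> k \<Longrightarrow> a k = a K"
proof -
  have "decseq a"
    using a nonneg \<theta> by (intro decseq_SucI) (metis mult_left_le_one_le order.refl less_imp_le)
  then obtain L where L: "a \<longlonglongrightarrow> L" "\<And>k. L \<le> a k"
    using decseq_convergent nonneg by metis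
  have "L \<noteq> 0" using L(1) not_zero by auto
  moreover have "0 \<le> L" using LIMSEQ_le_const[OF L(1)] nonneg by blast
  ultimately have gap: "0 < (1 - \<theta>) * L" using \<theta> by simp
  have "(\<lambda>k. a k - a (Suc k)) \<longlonglongrightarrow> L - L"
    using L(1) by (intro tendsto_diff LIMSEQ_Suc)
  then obtain K where K: "\<And>k. K \<le> k \<Longrightarrow> a k - a (Suc k) < (1 - \<theta>) * L"
    using LIMSEQ_D[OF _ gap] by fastforce
  text \<open>A shrinking step at \<open>k\<close> would decrease \<open>a\<close> by \<open>(1 - \<theta>) * a k \<ge> (1 - \<theta>) * L\<close>.\<close>
  have "a (Suc k) = a k" if "K \<le> k" for k
    using a[of k] K[OF that] mult_left_mono[OF L(2)[of k], of "1 - \<theta>"] \<theta>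
    by (auto simp: algebra_simps)
  then have "a (K + m) = a K" for m by (induction m) auto
  then show thesis by (metis le_add_diff_inverse that)
qed

lemma LIMSEQ_zero_if_decrease_bounded_below:
  fixes v s :: "nat \<Rightarrow> real"
  assumes dec: "\<And>k. v (Suc k) \<le> v k - c * s k" and c: "0 < c" and s: "\<And>k. 0 \<le> s k"
    and bdd: "\<And>k. m \<le> v k"
  shows "s \<longlonglongrightarrow> 0"
proof -
  have "c * (\<Sum>k<N. s k) \<le> v 0 - v N" for N
  proof (induction N)
    case (Suc N) then show ?case using dec[of N] by (simp add: distrib_left)
  qed simp
  then have "c * (\<Sum>k\<le>N. s k) \<le> v 0 - m" for N
    using bdd[of "Suc N"] by (smt (verit) lessThan_Suc_atMost)
  then have "(\<Sum>k\<le>N. s k) \<le> (v 0 - m) / c" for N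
    using c by (simp add: field_simps)
  then show ?thesis by (intro summable_LIMSEQ_zero bounded_imp_summable[OF s])
qed

definition penalty_real ::
  "(real^'n \<Rightarrow> real) \<Rightarrow> (real^'n \<Rightarrow> real^'m) \<Rightarrow> nat \<Rightarrow> (nat \<Rightarrow> real^'n \<Rightarrow> real)
     \<Rightarrow> real \<Rightarrow> real \<Rightarrow> real^'n \<Rightarrow> real" where
  "penalty_real f g q h \<nu> \<epsilon> x =
     f x - \<epsilon> * (\<Sum>j\<in>UNIV. ln (- (g x $ j))) + (1 / \<epsilon>) * (\<Sum>j<q. \<bar>h j x\<bar> powr \<nu>)"

lemma penalty_eq_ereal_penalty_real:
  "x \<in> strict_feas g \<Longrightarrow> penalty f g q h \<nu> \<epsilon> x = ereal (penalty_real f g q h \<nu> \<epsilon> x)"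
  by (simp add: penalty_def penalty_real_def)

lemma penalty_real_ge_log_constraint:
  fixes f :: "real^'n \<Rightarrow> real" and g :: "real^'n \<Rightarrow> real^'m"
  assumes x: "x \<in> strict_feas g" and F: "\<bar>f x\<bar> \<le> F"
    and G: "\<And>i. - (g x $ i) \<le> G" "1 \<le> G" and \<epsilon>: "0 < \<epsilon>"
  shows "- F - \<epsilon> * ln (- (g x $ j)) - \<epsilon> * (CARD('m) * ln G) \<le> penalty_real f g q h \<nu> \<epsilon> x"
proof -
  have neg: "0 < - (g x $ i)" for i using x by (simp add: strict_feas_def)
  have "(\<Sum>i\<in>UNIV - {j}. ln (- (g x $ i))) \<le> (\<Sum>i\<in>UNIV - {j}. ln G)"
    using neg G by (intro sum_mono) simp
  also have "\<dots> \<le> CARD('m) * ln G"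
    using G(2) by (simp add: card_Diff_singleton mult_right_mono)
  finally have "(\<Sum>i\<in>UNIV. ln (- (g x $ i))) \<le> ln (- (g x $ j)) + CARD('m) * ln G"
    using sum.remove[of UNIV j "\<lambda>i. ln (- (g x $ i))"] by simp
  then have "\<epsilon> * (\<Sum>i\<in>UNIV. ln (- (g x $ i))) \<le> \<epsilon> * ln (- (g x $ j)) + \<epsilon> * (CARD('m) * ln G)"
    using \<epsilon> by (metis distrib_left mult_left_mono less_imp_le)
  moreover have "0 \<le> (1 / \<epsilon>) * (\<Sum>j<q. \<bar>h j x\<bar> powr \<nu>)"
    using \<epsilon> by (intro mult_nonneg_nonneg sum_nonneg) auto
  ultimately show ?thesis using F by (simp add: penalty_real_def)
qed

lemma bounds_on_compact:
  fixes f :: "real^'n \<Rightarrow> real" and g :: "real^'n \<Rightarrow> real^'m"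
  assumes "compact K" "continuous_on K f" "continuous_on K g"
  obtains F G where "\<And>x. x \<in> K \<Longrightarrow> \<bar>f x\<bar> \<le> F" "1 \<le> G" "\<And>x i. x \<in> K \<Longrightarrow> - (g x $ i) \<le> G"
proof -
  have "bounded (f ` K)" "bounded (g ` K)"
    using assms by (simp_all add: compact_imp_bounded compact_continuous_image)
  then obtain F G where F: "\<forall>x\<in>K. norm (f x) \<le> F" and G: "\<forall>x\<in>K. norm (g x) \<le> G"
    unfolding bounded_iff by auto
  show thesis
  proof (rule that[of F "max G 1"])
    fix x i assume "x \<in> K"
    then show "\<bar>f x\<bar> \<le> F" using F by simp
    have "- (g x $ i) \<le> norm (g x)" using component_le_norm_cart[of "g x" i] by simp
    also have "\<dots> \<le> G" using G \<open>x \<in> K\<close> by simp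
    finally show "- (g x $ i) \<le> max G 1" by simp
  qed simp
qed

lemma penalty_real_bounded_below:
  fixes f :: "real^'n \<Rightarrow> real" and g :: "real^'n \<Rightarrow> real^'m"
  assumes "compact K" "continuous_on K f" "continuous_on K g" "0 < \<epsilon>"
  obtains m where "\<And>x. x \<in> K \<inter> strict_feas g \<Longrightarrow> m \<le> penalty_real f g q h \<nu> \<epsilon> x"
proof -
  obtain F G where F: "\<And>x. x \<in> K \<Longrightarrow> \<bar>f x\<bar> \<le> F"
    and G: "1 \<le> G" "\<And>x i. x \<in> K \<Longrightarrow> - (g x $ i) \<le> G"
    using bounds_on_compact[OF assms(1-3)] by blast
  have "- F - \<epsilon> * ln G - \<epsilon> * (CARD('m) * ln G) \<le> penalty_real f g q h \<nu> \<epsilon> x"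
    if x: "x \<in> K \<inter> strict_feas g" for x
  proof -
    fix j :: 'm
    have "x \<in> K" "x \<in> strict_feas g" using x by auto
    then have "0 < - (g x $ j)" "- (g x $ j) \<le> G" using G(2) by (auto simp: strict_feas_def)
    then have "\<epsilon> * ln (- (g x $ j)) \<le> \<epsilon> * ln G" using \<open>0 < \<epsilon>\<close> by simp
    moreover have "- F - \<epsilon> * ln (- (g x $ j)) - \<epsilon> * (CARD('m) * ln G)
        \<le> penalty_real f g q h \<nu> \<epsilon> x"
      using penalty_real_ge_log_constraint[where f = f and x = x and F = F and G = G,
          OF \<open>x \<in> strict_feas g\<close> F[OF \<open>x \<in> K\<close>]
          G(2)[OF \<open>x \<in> K\<close>] G(1) \<open>0 < \<epsilon>\<close>] .
    ultimately show ?thesis by linarith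
  qed
  then show thesis by (rule that)
qed

lemma penalty_real_sublevel_away_from_boundary:
  fixes f :: "real^'n \<Rightarrow> real" and g :: "real^'n \<Rightarrow> real^'m"
  assumes "compact K" "continuous_on K f" "continuous_on K g" "0 < \<epsilon>"
  obtains c where "0 < c"
    "\<And>x j. x \<in> K \<inter> strict_feas g \<Longrightarrow> penalty_real f g q h \<nu> \<epsilon> x \<le> C \<Longrightarrow> c \<le> \<bar>g x $ j\<bar>"
proof -
  obtain F G where F: "\<And>x. x \<in> K \<Longrightarrow> \<bar>f x\<bar> \<le> F"
    and G: "1 \<le> G" "\<And>x i. x \<in> K \<Longrightarrow> - (g x $ i) \<le> G"
    using bounds_on_compact[OF assms(1-3)] by blast
  define M where "M = F + C + \<epsilon> * (CARD('m) * ln G)"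
  have "exp (- M / \<epsilon>) \<le> \<bar>g x $ j\<bar>"
    if x: "x \<in> K \<inter> strict_feas g" and C: "penalty_real f g q h \<nu> \<epsilon> x \<le> C" for x j
  proof -
    have "x \<in> K" "x \<in> strict_feas g" using x by auto
    have "- F - \<epsilon> * ln (- (g x $ j)) - \<epsilon> * (CARD('m) * ln G)
        \<le> penalty_real f g q h \<nu> \<epsilon> x"
      using penalty_real_ge_log_constraint[where f = f and x = x and F = F and G = G,
          OF \<open>x \<in> strict_feas g\<close> F[OF \<open>x \<in> K\<close>]
          G(2)[OF \<open>x \<in> K\<close>] G(1) \<open>0 < \<epsilon>\<close>] .
    then have "- M \<le> \<epsilon> * ln (- (g x $ j))" using C by (simp add: M_def)
    then have "exp (- M / \<epsilon>) \<le> exp (ln (- (g x $ j)))"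
      using \<open>0 < \<epsilon>\<close> by (simp add: field_simps)
    also have "\<dots> = \<bar>g x $ j\<bar>" using \<open>x \<in> strict_feas g\<close> by (simp add: strict_feas_def abs_if)
    finally show ?thesis .
  qed
  then show thesis using that[of "exp (- M / \<epsilon>)"] by simp
qed

text \<open>Steps (a)--(c) for one direction \<open>D\<close> from \<open>yi\<close>, literally as in \<open>logdfl_run\<close>: \<open>ap\<close>, \<open>an\<close>
  are the trial steps along \<open>D\<close>, \<open>-D\<close>; \<open>al\<close> is the accepted step; \<open>at'\<close>, \<open>d'\<close>, \<open>y'\<close> are the
  new tentative step, direction and point.\<close>
definition coordinate_search ::
  "(real^'n \<Rightarrow> ereal) \<Rightarrow> (real^'n) set \<Rightarrow> (real^'n) set \<Rightarrow> real^'n \<Rightarrow> real^'n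
     \<Rightarrow> real \<Rightarrow> real \<Rightarrow> real \<Rightarrow> real^'n \<Rightarrow> real^'n \<Rightarrow> real
     \<Rightarrow> real \<Rightarrow> real \<Rightarrow> real \<Rightarrow> real \<Rightarrow> real^'n \<Rightarrow> real^'n \<Rightarrow> bool" where
  "coordinate_search Pk S X l u \<delta> \<gamma> \<theta> yi D A ap an al at' d' y' \<longleftrightarrow>
   (let succ = (\<lambda>a dir. 0 < a \<and> Pk (yi + a *\<^sub>R dir) \<le> Pk yi - ereal (\<gamma> * a\<^sup>2))
    in 0 \<le> ap \<and> ap \<le> A \<and> yi + ap *\<^sub>R D \<in> S \<inter> X \<and>
       (if succ ap D
        then expand Pk S l u \<delta> \<gamma> yi D ap al \<and> at' = al \<and> d' = D
        else 0 \<le> an \<and> an \<le> A \<and> yi + an *\<^sub>R (- D) \<in> S \<inter> X \<and>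
             (if succ an (- D)
              then expand Pk S l u \<delta> \<gamma> yi (- D) an al \<and> at' = al \<and> d' = - D
              else al = 0 \<and> d' = D \<and> at' = \<theta> * A))
       \<and> y' = yi + al *\<^sub>R d')"

lemma coordinate_search_cases:
  assumes "coordinate_search Pk S X l u \<delta> \<gamma> \<theta> yi D A ap an al at' d' y'"
  shows "(d' = D \<or> d' = - D) \<and> (at' = al \<or> at' = \<theta> * A)"
  using assms unfolding coordinate_search_def Let_def by (auto split: if_splits)

lemma coordinate_search_sufficient_decrease:
  fixes f :: "real^'n \<Rightarrow> real" and g :: "real^'n \<Rightarrow> real^'m"
  assumes search: "coordinate_search (penalty f g q h \<nu> \<epsilon>) (strict_feas g) (box_set l u) l u
      \<delta> \<gamma> \<theta> yi D A ap an al at' d' y'"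
    and yi: "yi \<in> strict_feas g \<inter> box_set l u" and D: "D \<noteq> 0" and \<delta>: "0 < \<delta>"
  shows "y' \<in> strict_feas g \<inter> box_set l u \<and>
     penalty_real f g q h \<nu> \<epsilon> y' \<le> penalty_real f g q h \<nu> \<epsilon> yi - \<gamma> * al\<^sup>2"
proof -
  let ?P = "penalty f g q h \<nu> \<epsilon>" and ?S = "strict_feas g" and ?X = "box_set l u"
  have accepted: ?thesis
    if "expand ?P ?S l u \<delta> \<gamma> yi p a al" "?P (yi + a *\<^sub>R p) \<le> ?P yi - ereal (\<gamma> * a\<^sup>2)" "0 \<le> a"
      "yi + a *\<^sub>R p \<in> ?S \<inter> ?X" "p \<noteq> 0" "y' = yi + al *\<^sub>R p" for p a
  proof -
    have "?P y' \<le> ?P yi - ereal (\<gamma> * al\<^sup>2)" "y' \<in> ?S \<inter> ?X"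
      using expand_sufficient_decrease[OF that(1-3)] that(4-6) yi \<delta> by auto
    then show ?thesis using yi by (simp add: penalty_eq_ereal_penalty_real)
  qed
  let ?succ = "\<lambda>a p. 0 < a \<and> ?P (yi + a *\<^sub>R p) \<le> ?P yi - ereal (\<gamma> * a\<^sup>2)"
  note search = search[unfolded coordinate_search_def Let_def]
  consider "?succ ap D" | "\<not> ?succ ap D" "?succ an (- D)" | "\<not> ?succ ap D" "\<not> ?succ an (- D)"
    by blast
  then show ?thesis
  proof cases
    case 1
    then have "expand ?P ?S l u \<delta> \<gamma> yi D ap al" "yi + ap *\<^sub>R D \<in> ?S \<inter> ?X" "y' = yi + al *\<^sub>R D"
      using search unfolding if_P[OF 1] by auto
    then show ?thesis using 1 D by (intro accepted[of D ap]) auto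
  next
    case 2
    then have "expand ?P ?S l u \<delta> \<gamma> yi (- D) an al" "yi + an *\<^sub>R (- D) \<in> ?S \<inter> ?X"
        "y' = yi + al *\<^sub>R (- D)"
      using search unfolding if_not_P[OF 2(1)] if_P[OF 2(2)] by auto
    then show ?thesis using 2 D by (intro accepted[of "- D" an]) auto
  next
    case 3
    then have "y' = yi" "al = 0" using search unfolding if_not_P[OF 3(1)] if_not_P[OF 3(2)] by auto
    then show ?thesis using yi by simp
  qed
qed

locale logdfl =
  fixes f :: "real^'n \<Rightarrow> real" and g :: "real^'n \<Rightarrow> real^'m"
    and q :: nat and h :: "nat \<Rightarrow> real^'n \<Rightarrow> real"
    and l u :: "real^'n" and \<nu> \<epsilon>0 \<gamma> \<theta> pe \<delta> :: real
    and ix :: "nat \<Rightarrow> 'n"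
    and x :: "nat \<Rightarrow> real^'n" and eps :: "nat \<Rightarrow> real"
    and atil alpha ahp ahn :: "nat \<Rightarrow> nat \<Rightarrow> real"
    and d y :: "nat \<Rightarrow> nat \<Rightarrow> real^'n"
  assumes run: "logdfl_run f g q h \<nu> l u \<epsilon>0 \<gamma> \<theta> pe \<delta> ix x eps atil alpha d y ahp ahn"
    and f_cont: "continuous_on (box_set l u) f" and g_cont: "continuous_on (box_set l u) g"
    and \<epsilon>0_pos: "0 < \<epsilon>0" and \<gamma>_pos: "0 < \<gamma>" and \<theta>: "0 < \<theta>" "\<theta> < 1" and \<delta>_pos: "0 < \<delta>"
begin

abbreviation P :: "real \<Rightarrow> real^'n \<Rightarrow> real" where
  "P \<equiv> penalty_real f g q h \<nu>"

lemma run_initial: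
  "x 0 \<in> box_set l u \<inter> strict_feas g" "eps 0 = \<epsilon>0" "\<And>i. i < CARD('n) \<Longrightarrow> d 0 i = axis (ix i) 1"
  using run[unfolded logdfl_run_def Let_def, THEN conjunct1]
    run[unfolded logdfl_run_def Let_def, THEN conjunct2, THEN conjunct1]
    run[unfolded logdfl_run_def Let_def, THEN conjunct2, THEN conjunct2, THEN conjunct1]
  by auto

lemma run_iteration:
  "y k 0 = x k \<and>
   (\<forall>i<CARD('n). coordinate_search (penalty f g q h \<nu> (eps k)) (strict_feas g) (box_set l u)
     l u \<delta> \<gamma> \<theta> (y k i) (d k i) (atil k i) (ahp k i) (ahn k i)
     (alpha k i) (atil (Suc k) i) (d (Suc k) i) (y k (Suc i))) \<and>
   eps (Suc k) =
     (if (MAX i\<in>{..<CARD('n)}. max (atil k i) (alpha k i))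
           \<le> min (eps k powr pe) ((Min {\<bar>g (y k i) $ j\<bar> | i j. i \<le> CARD('n)})\<^sup>2)
      then \<theta> * eps k else eps k) \<and>
   x (Suc k) \<in> strict_feas g \<inter> box_set l u \<and>
   penalty f g q h \<nu> (eps k) (x (Suc k)) \<le> penalty f g q h \<nu> (eps k) (y k CARD('n))"
  unfolding coordinate_search_def Let_def
  by (rule run[unfolded logdfl_run_def Let_def, THEN conjunct2, THEN conjunct2, THEN conjunct2,
        THEN spec])

lemma eps_Suc:
  "eps (Suc k) =
     (if (MAX i\<in>{..<CARD('n)}. max (atil k i) (alpha k i))
           \<le> min (eps k powr pe) ((Min {\<bar>g (y k i) $ j\<bar> | i j. i \<le> CARD('n)})\<^sup>2)
      then \<theta> * eps k else eps k)"
  using run_iteration[of k] by blast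

lemma eps_Suc_cases: "eps (Suc k) = eps k \<or> eps (Suc k) = \<theta> * eps k"
  using eps_Suc[of k] by auto

lemma eps_pos: "0 < eps k"
proof (induction k)
  case 0 then show ?case using run_initial(2) \<epsilon>0_pos by simp
next
  case (Suc k) then show ?case using eps_Suc_cases[of k] \<theta> by auto
qed

lemma run_coordinate_search:
  "i < CARD('n) \<Longrightarrow> coordinate_search (penalty f g q h \<nu> (eps k)) (strict_feas g) (box_set l u)
     l u \<delta> \<gamma> \<theta> (y k i) (d k i) (atil k i) (ahp k i) (ahn k i)
     (alpha k i) (atil (Suc k) i) (d (Suc k) i) (y k (Suc i))"
  using run_iteration[of k] by blast

lemma direction_nonzero:
  assumes "i < CARD('n)" shows "d k i \<noteq> 0"
proof -
  have "norm (d k i) = 1"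
  proof (induction k)
    case 0 then show ?case using run_initial(3)[OF assms] by simp
  next
    case (Suc k)
    then show ?case using coordinate_search_cases[OF run_coordinate_search[OF assms, of k]] by auto
  qed
  then show ?thesis by auto
qed

lemma x_feasible: "x k \<in> strict_feas g \<inter> box_set l u"
  using run_initial(1) run_iteration[of "k - 1"] by (cases k) auto

lemma inner_sufficient_decrease:
  assumes "i \<le> CARD('n)"
  shows "y k i \<in> strict_feas g \<inter> box_set l u \<and>
    P (eps k) (y k i) \<le> P (eps k) (x k) - \<gamma> * (\<Sum>j<i. (alpha k j)\<^sup>2)"
  using assms
proof (induction i)
  case 0 then show ?case using run_iteration[of k] x_feasible by simp
next
  case (Suc i)
  then have i: "i < CARD('n)" by simp
  have "y k (Suc i) \<in> strict_feas g \<inter> box_set l u \<and>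
    P (eps k) (y k (Suc i)) \<le> P (eps k) (y k i) - \<gamma> * (alpha k i)\<^sup>2"
    using Suc i by (intro coordinate_search_sufficient_decrease[OF run_coordinate_search[OF i]]
        direction_nonzero \<delta>_pos) auto
  then show ?case using Suc i by (simp add: algebra_simps)
qed

lemma outer_sufficient_decrease:
  "P (eps k) (x (Suc k)) \<le> P (eps k) (x k) - \<gamma> * (\<Sum>i<CARD('n). (alpha k i)\<^sup>2)"
proof -
  have "penalty f g q h \<nu> (eps k) (x (Suc k)) \<le> penalty f g q h \<nu> (eps k) (y k CARD('n))"
    using run_iteration[of k] by blast
  then show ?thesis
    using inner_sufficient_decrease[of "CARD('n)" k] x_feasible[of "Suc k"]
    by (simp add: penalty_eq_ereal_penalty_real)
qed

lemma steps_LIMSEQ_zero: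
  assumes const: "\<And>k. K \<le> k \<Longrightarrow> eps k = eps K" and i: "i < CARD('n)"
  shows "(\<lambda>k. alpha k i) \<longlonglongrightarrow> 0" and "(\<lambda>k. atil k i) \<longlonglongrightarrow> 0"
proof -
  define s where "s j = (\<Sum>i<CARD('n). (alpha (K + j) i)\<^sup>2)" for j
  obtain m where m: "\<And>z. z \<in> box_set l u \<inter> strict_feas g \<Longrightarrow> m \<le> P (eps K) z"
    using penalty_real_bounded_below[OF compact_box_set f_cont g_cont eps_pos[of K], of q h \<nu>] by blast
  have "s \<longlonglongrightarrow> 0"
  proof (rule LIMSEQ_zero_if_decrease_bounded_below[where v = "\<lambda>j. P (eps K) (x (K + j))" and m = m,
        OF _ \<gamma>_pos])
    show "P (eps K) (x (K + Suc j)) \<le> P (eps K) (x (K + j)) - \<gamma> * s j" for j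
      using outer_sufficient_decrease[of "K + j"] const[of "K + j"] by (simp add: s_def)
    show "m \<le> P (eps K) (x (K + j))" for j
      using m x_feasible[of "K + j"] by blast
    show "0 \<le> s j" for j by (simp add: s_def sum_nonneg)
  qed
  then have sqrt_lim: "(\<lambda>j. sqrt (s j)) \<longlonglongrightarrow> 0"
    using tendsto_real_sqrt[of s 0] by simp
  have bound: "norm (alpha (j + K) i) \<le> sqrt (s j)" for j
  proof -
    have "(alpha (K + j) i)\<^sup>2 \<le> s j"
      unfolding s_def using i by (intro member_le_sum) auto
    then have "sqrt ((alpha (K + j) i)\<^sup>2) \<le> sqrt (s j)" by (rule real_sqrt_le_mono)
    then show ?thesis by (simp add: add.commute[of j K])
  qed
  have "(\<lambda>j. alpha (j + K) i) \<longlonglongrightarrow> 0"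
    by (rule Lim_null_comparison[OF always_eventually sqrt_lim]) (use bound in blast)
  then show alpha: "(\<lambda>k. alpha k i) \<longlonglongrightarrow> 0" by (rule LIMSEQ_offset)
  have "atil (Suc k) i = alpha k i \<or> atil (Suc k) i = \<theta> * atil k i" for k
    using coordinate_search_cases[OF run_coordinate_search[OF i, of k]] by blast
  then show "(\<lambda>k. atil k i) \<longlonglongrightarrow> 0"
    using \<theta> by (intro LIMSEQ_zero_if_reset_or_shrink[OF alpha, of _ \<theta>]) simp_all
qed

lemma constraints_bounded_away:
  assumes const: "\<And>k. K \<le> k \<Longrightarrow> eps k = eps K"
  obtains c where "0 < c" "\<And>k i j. K \<le> k \<Longrightarrow> i \<le> CARD('n) \<Longrightarrow> c \<le> \<bar>g (y k i) $ j\<bar>"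
proof -
  have x_sublevel: "P (eps K) (x k) \<le> P (eps K) (x K)" if "K \<le> k" for k
    using that
  proof (induction rule: dec_induct)
    case (step k)
    have "0 \<le> \<gamma> * (\<Sum>i<CARD('n). (alpha k i)\<^sup>2)" using \<gamma>_pos by (simp add: sum_nonneg)
    then show ?case using outer_sufficient_decrease[of k] const[of k] step by simp
  qed simp
  obtain c where c: "0 < c" "\<And>z j. z \<in> box_set l u \<inter> strict_feas g \<Longrightarrow>
      P (eps K) z \<le> P (eps K) (x K) \<Longrightarrow> c \<le> \<bar>g z $ j\<bar>"
    using penalty_real_sublevel_away_from_boundary[OF compact_box_set f_cont g_cont eps_pos[of K],
        where q = q and h = h and \<nu> = \<nu> and C = "P (eps K) (x K)"] by blast
  have "c \<le> \<bar>g (y k i) $ j\<bar>" if "K \<le> k" "i \<le> CARD('n)" for k i j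
  proof (rule c(2))
    have "0 \<le> \<gamma> * (\<Sum>j<i. (alpha k j)\<^sup>2)" using \<gamma>_pos by (simp add: sum_nonneg)
    then show "P (eps K) (y k i) \<le> P (eps K) (x K)"
      using inner_sufficient_decrease[OF that(2), of k] x_sublevel[OF that(1)] const[OF that(1)]
      by simp
    show "y k i \<in> box_set l u \<inter> strict_feas g" using inner_sufficient_decrease[OF that(2)] by blast
  qed
  then show thesis using that c(1) by blast
qed

lemma eps_Suc_shrinks:
  assumes steps: "\<And>i. i < CARD('n) \<Longrightarrow> atil k i \<le> t \<and> alpha k i \<le> t"
    and t: "t \<le> eps k powr pe" "t \<le> c\<^sup>2"
    and c: "0 \<le> c" "\<And>i j. i \<le> CARD('n) \<Longrightarrow> c \<le> \<bar>g (y k i) $ j\<bar>"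
  shows "eps (Suc k) = \<theta> * eps k"
proof -
  have "(MAX i\<in>{..<CARD('n)}. max (atil k i) (alpha k i)) \<le> t"
    using steps by (subst Max_le_iff) (auto simp: lessThan_empty_iff)
  moreover have "c \<le> Min {\<bar>g (y k i) $ j\<bar> | i j. i \<le> CARD('n)}"
  proof -
    have "{\<bar>g (y k i) $ j\<bar> | i j. i \<le> CARD('n)} = (\<lambda>(i, j). \<bar>g (y k i) $ j\<bar>) ` ({..CARD('n)} \<times> UNIV)"
      by auto
    then show ?thesis using c(2) by (auto simp: Min_ge_iff)
  qed
  then have "c\<^sup>2 \<le> (Min {\<bar>g (y k i) $ j\<bar> | i j. i \<le> CARD('n)})\<^sup>2"
    using c(1) by (simp add: power_mono)
  ultimately have "(MAX i\<in>{..<CARD('n)}. max (atil k i) (alpha k i))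
      \<le> min (eps k powr pe) ((Min {\<bar>g (y k i) $ j\<bar> | i j. i \<le> CARD('n)})\<^sup>2)"
    using t unfolding min.bounded_iff by linarith
  then show ?thesis unfolding eps_Suc[of k] by (rule if_P)
qed

lemma eps_LIMSEQ_zero: "eps \<longlonglongrightarrow> 0"
proof (rule ccontr)
  assume "\<not> eps \<longlonglongrightarrow> 0"
  then obtain K where const: "\<And>k. K \<le> k \<Longrightarrow> eps k = eps K"
    using eventually_const_if_not_LIMSEQ_zero[of eps \<theta>] eps_Suc_cases eps_pos \<theta>
    by (meson less_imp_le)
  obtain c where c: "0 < c" "\<And>k i j. K \<le> k \<Longrightarrow> i \<le> CARD('n) \<Longrightarrow> c \<le> \<bar>g (y k i) $ j\<bar>"
    using constraints_bounded_away[OF const] by blast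
  define t where "t = min (eps K powr pe) (c\<^sup>2)"
  have "0 < t" using eps_pos[of K] c(1) by (simp add: t_def)
  have "\<forall>\<^sub>F k in sequentially. \<forall>i\<in>{..<CARD('n)}. atil k i < t \<and> alpha k i < t"
  proof (intro eventually_ball_finite ballI)
    fix i assume "i \<in> {..<CARD('n)}"
    then have "(\<lambda>k. atil k i) \<longlonglongrightarrow> 0" "(\<lambda>k. alpha k i) \<longlonglongrightarrow> 0"
      using steps_LIMSEQ_zero[OF const] by auto
    then show "\<forall>\<^sub>F k in sequentially. atil k i < t \<and> alpha k i < t"
      using \<open>0 < t\<close> by (intro eventually_conj order_tendstoD(2)) auto
  qed simp
  then obtain N where N: "\<And>k. N \<le> k \<Longrightarrow> \<forall>i\<in>{..<CARD('n)}. atil k i < t \<and> alpha k i < t"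
    unfolding eventually_sequentially by blast
  define k where "k = max N K"
  have "eps (Suc k) = \<theta> * eps k"
  proof (rule eps_Suc_shrinks)
    show "atil k i \<le> t \<and> alpha k i \<le> t" if "i < CARD('n)" for i
      using N[of k] that by (force simp: k_def)
    show "t \<le> eps k powr pe" using const[of k] by (simp add: k_def t_def)
    show "c \<le> \<bar>g (y k i) $ j\<bar>" if "i \<le> CARD('n)" for i j
      using c(2) that by (simp add: k_def)
  qed (use c(1) in \<open>simp_all add: t_def\<close>)
  moreover have "eps (Suc k) = eps k" using const[of k] const[of "Suc k"] by (simp add: k_def)
  ultimately show False using eps_pos[of k] \<theta> by simp
qed

end

theorem proposition4p1:
  fixes f :: "real^'n \<Rightarrow> real" and g :: "real^'n \<Rightarrow> real^'m"
    and q :: nat and h :: "nat \<Rightarrow> real^'n \<Rightarrow> real"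
    and l u :: "real^'n" and \<nu> \<epsilon>0 \<gamma> \<theta> pe \<delta> :: real
    and ix :: "nat \<Rightarrow> 'n"
    and x :: "nat \<Rightarrow> real^'n" and eps :: "nat \<Rightarrow> real"
    and atil alpha ahp ahn :: "nat \<Rightarrow> nat \<Rightarrow> real"
    and d y :: "nat \<Rightarrow> nat \<Rightarrow> real^'n"
  assumes "C1_fun f" and "C1_fun g" and "\<forall>j<q. C1_fun (h j)"
    and "\<forall>i. l $ i < u $ i"
    and "box_set l u \<inter> strict_feas g \<noteq> {}"
    and "\<nu> > 1"
    and "\<epsilon>0 > 0" and "\<gamma> > 0" and "0 < \<theta>" and "\<theta> < 1" and "pe > 1"
    and "0 < \<delta>" and "\<delta> < 1"
    and "bij_betw ix {..<CARD('n)} UNIV"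
    and "logdfl_run f g q h \<nu> l u \<epsilon>0 \<gamma> \<theta> pe \<delta> ix x eps atil alpha d y ahp ahn"
  shows "eps \<longlonglongrightarrow> 0"
proof -
  \<comment> \<open>Only continuity of \<open>f\<close>, \<open>g\<close> and the signs of \<open>\<epsilon>0\<close>, \<open>\<gamma>\<close>, \<open>\<theta>\<close>, \<open>\<delta>\<close> and \<open>\<theta> < 1\<close> are needed.\<close>
  interpret logdfl f g q h l u \<nu> \<epsilon>0 \<gamma> \<theta> pe \<delta> ix x eps atil alpha ahp ahn d y
    using assms by unfold_locales (simp_all add: C1_fun_imp_continuous_on)
  show ?thesis by (rule eps_LIMSEQ_zero)
qed

end
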